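(* Let $V$ be a Majorana representation with identity $\mathbb 1$ satisfying axiom M2'. Then the Majorana axes of $V$ (the elements of $\psi(T)$) are indecomposable idempotents.
   Context: A transposition group $(G,T)$ is a finite group $G$ with a $G$-stable set $T$ of involutions generating $G$. A Majorana representation of $(G,T)$ is a quintuple $(G,T,V,\varphi,\psi)$ where $V$ is a commutative non-associative real algebra with a (positive definite) inner product $(\,,)$, $\varphi:G\to GL(V)$ is a representation with $\varphi(G)\le \mathrm{Aut}(V)$, and $\psi:T\to V\setminus\{0\}$ is injective with $\psi(t^g)=\psi(t)^{\varphi(g)}$, such that: (M1) $(u,v\cdot w)=(u\cdot v,w)$ for all $u,v,w$; (M2) $(u\cdot u,v\cdot v)\ge (u\cdot v,u\cdot v)$ for all $u,v$; (M3) elements of $\psi(T)$ (Majorana axes) are idempotents of length $1$; (M4) each Majorana axis $a$ has $\mathrm{ad}_a:u\mapsto a\cdot u$ diagonalizable with eigenvalues in $\{0,1,\frac1{4},\frac1{32}\}$; (M5) $1$ is a simple eigenvalue of each Majorana axis; (M6) for each axis $a$ the linear map $\tau(a)$ acting as $(-1)^{32\mu}$ on the $\mu$-eigenspace of $\mathrm{ad}_a$ is an algebra automorphism; (M7) for each axis $a$ the map $\sigma(a)$ on $C_V(\tau(a))$ acting as $(-1)^{4\mu}$ on the $\mu$-eigenspaces, $\mu\ne\frac1{32}$, preserves the product of $C_V(\tau(a))$; (M8) $\tau(\psi(t))=\varphi(t)$ for all $t\in T$. Axiom M2': the Norton inequality holds for all $u,v$, with equality precisely when $\mathrm{ad}_u$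 and $\mathrm{ad}_v$ commute. An idempotent is decomposable if it can be written as a sum of at least two non-zero idempotents, and indecomposable otherwise. *)

theory Defs
  imports "HOL-Analysis.Analysis" "HOL-Algebra.Generated_Groups"
begin

definition transposition_group :: "('g, 'b) monoid_scheme \<Rightarrow> 'g set \<Rightarrow> bool" where
  "transposition_group G T \<longleftrightarrow>
     group G \<and> finite (carrier G) \<and> T \<subseteq> carrier G \<and>
     (\<forall>t\<in>T. t \<noteq> \<one>\<^bsub>G\<^esub> \<and> t \<otimes>\<^bsub>G\<^esub> t = \<one>\<^bsub>G\<^esub>) \<and>
     (\<forall>t\<in>T. \<forall>g\<in>carrier G. inv\<^bsub>G\<^esub> g \<otimes>\<^bsub>G\<^esub> t \<otimes>\<^bsub>G\<^esub> g \<in> T) \<and>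
     generate G T = carrier G"

definition eig_decomp :: "('v::real_vector \<Rightarrow> 'v \<Rightarrow> 'v) \<Rightarrow> 'v \<Rightarrow> 'v \<Rightarrow> 'v \<Rightarrow> 'v \<Rightarrow> 'v \<Rightarrow> 'v \<Rightarrow> bool" where
  "eig_decomp m a v v0 v1 v4 v32 \<longleftrightarrow>
     v = v0 + v1 + v4 + v32 \<and> m a v0 = 0 \<and> m a v1 = v1 \<and>
     m a v4 = (1/4) *\<^sub>R v4 \<and> m a v32 = (1/32) *\<^sub>R v32"

(* tau(a): acts as (-1)^(32 mu) on the mu-eigenspace *)
definition tau_map :: "('v::real_vector \<Rightarrow> 'v \<Rightarrow> 'v) \<Rightarrow> 'v \<Rightarrow> 'v \<Rightarrow> 'v" where
  "tau_map m a v = (THE w. \<exists>v0 v1 v4 v32. eig_decomp m a v v0 v1 v4 v32 \<and> w = v0 + v1 + v4 - v32)"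

(* sigma(a) on C_V(tau(a)): acts as (-1)^(4 mu) on the mu-eigenspaces, mu \<noteq> 1/32
   (only used on C_V(tau(a)), where the 1/32-component vanishes) *)
definition sigma_map :: "('v::real_vector \<Rightarrow> 'v \<Rightarrow> 'v) \<Rightarrow> 'v \<Rightarrow> 'v \<Rightarrow> 'v" where
  "sigma_map m a v = (THE w. \<exists>v0 v1 v4 v32. eig_decomp m a v v0 v1 v4 v32 \<and> w = v0 + v1 - v4 + v32)"

definition algebra_aut :: "('v::real_vector \<Rightarrow> 'v \<Rightarrow> 'v) \<Rightarrow> ('v \<Rightarrow> 'v) \<Rightarrow> bool" where
  "algebra_aut m f \<longleftrightarrow> linear f \<and> bij f \<and> (\<forall>u v. f (m u v) = m (f u) (f v))"

(* Majorana representation (G,T,V,phi,psi); V is the real inner product space 'v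
   with commutative bilinear product m. phi acts on the right: v^(phi g) = phi g v,
   so phi (g h) = phi h o phi g and t^g = g^-1 t g. *)
definition majorana_rep ::
  "('g, 'b) monoid_scheme \<Rightarrow> 'g set \<Rightarrow> ('v::real_inner \<Rightarrow> 'v \<Rightarrow> 'v) \<Rightarrow> ('g \<Rightarrow> 'v \<Rightarrow> 'v) \<Rightarrow> ('g \<Rightarrow> 'v) \<Rightarrow> bool" where
  "majorana_rep G T m \<phi> \<psi> \<longleftrightarrow>
     transposition_group G T \<and>
     bilinear m \<and> (\<forall>u v. m u v = m v u) \<and>
     (\<forall>g\<in>carrier G. algebra_aut m (\<phi> g)) \<and>
     (\<forall>g\<in>carrier G. \<forall>h\<in>carrier G. \<phi> (g \<otimes>\<^bsub>G\<^esub> h) = \<phi> h \<circ> \<phi> g) \<and>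
     inj_on \<psi> T \<and> (\<forall>t\<in>T. \<psi> t \<noteq> 0) \<and>
     (\<forall>t\<in>T. \<forall>g\<in>carrier G. \<psi> (inv\<^bsub>G\<^esub> g \<otimes>\<^bsub>G\<^esub> t \<otimes>\<^bsub>G\<^esub> g) = \<phi> g (\<psi> t)) \<and>
     \<comment> \<open>M1\<close>
     (\<forall>u v w. inner u (m v w) = inner (m u v) w) \<and>
     \<comment> \<open>M2\<close>
     (\<forall>u v. inner (m u u) (m v v) \<ge> inner (m u v) (m u v)) \<and>
     \<comment> \<open>M3\<close>
     (\<forall>t\<in>T. m (\<psi> t) (\<psi> t) = \<psi> t \<and> inner (\<psi> t) (\<psi> t) = 1) \<and>
     \<comment> \<open>M4\<close>
     (\<forall>t\<in>T. \<forall>v. \<exists>v0 v1 v4 v32. eig_decomp m (\<psi> t) v v0 v1 v4 v32) \<and>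
     \<comment> \<open>M5\<close>
     (\<forall>t\<in>T. \<forall>v. m (\<psi> t) v = v \<longrightarrow> (\<exists>c. v = c *\<^sub>R \<psi> t)) \<and>
     \<comment> \<open>M6\<close>
     (\<forall>t\<in>T. \<forall>u v. tau_map m (\<psi> t) (m u v) = m (tau_map m (\<psi> t) u) (tau_map m (\<psi> t) v)) \<and>
     \<comment> \<open>M7\<close>
     (\<forall>t\<in>T. \<forall>u v. tau_map m (\<psi> t) u = u \<longrightarrow> tau_map m (\<psi> t) v = v \<longrightarrow>
        sigma_map m (\<psi> t) (m u v) = m (sigma_map m (\<psi> t) u) (sigma_map m (\<psi> t) v)) \<and>
     \<comment> \<open>M8\<close>
     (\<forall>t\<in>T. tau_map m (\<psi> t) = \<phi> t)"

definition axiom_M2' :: "('v::real_inner \<Rightarrow> 'v \<Rightarrow> 'v) \<Rightarrow> bool" where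
  "axiom_M2' m \<longleftrightarrow>
     (\<forall>u v. inner (m u u) (m v v) \<ge> inner (m u v) (m u v) \<and>
        (inner (m u u) (m v v) = inner (m u v) (m u v) \<longleftrightarrow>
           (\<forall>w. m u (m v w) = m v (m u w))))"

definition has_identity :: "('v \<Rightarrow> 'v \<Rightarrow> 'v) \<Rightarrow> bool" where
  "has_identity m \<longleftrightarrow> (\<exists>e. \<forall>v. m e v = v)"

definition idempotent :: "('v \<Rightarrow> 'v \<Rightarrow> 'v) \<Rightarrow> 'v \<Rightarrow> bool" where
  "idempotent m x \<longleftrightarrow> m x x = x"

definition decomposable :: "('v::real_vector \<Rightarrow> 'v \<Rightarrow> 'v) \<Rightarrow> 'v \<Rightarrow> bool" where
  "decomposable m x \<longleftrightarrow> idempotent m x \<and>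
     (\<exists>xs. length xs \<ge> 2 \<and> (\<forall>y\<in>set xs. y \<noteq> 0 \<and> idempotent m y) \<and> sum_list xs = x)"

definition indecomposable_idempotent :: "('v::real_vector \<Rightarrow> 'v \<Rightarrow> 'v) \<Rightarrow> 'v \<Rightarrow> bool" where
  "indecomposable_idempotent m x \<longleftrightarrow> idempotent m x \<and> \<not> decomposable m x"

end

theory Submission
  imports Defs
begin

text \<open>Let the axis \<open>a\<close> be a sum of nonzero idempotents \<open>x\<^sub>i\<close>. Pairing with the identity
  \<open>\<one>\<close> and using associativity of the form, \<open>(\<one>, y) = (y, y)\<close> for every idempotent \<open>y\<close>,
  so \<open>(a, a) = \<Sum>\<^sub>i (x\<^sub>i, x\<^sub>i)\<close>; expanding \<open>(a, a)\<close> instead shows that the cross terms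
  \<open>(x\<^sub>i, x\<^sub>j)\<close> sum to zero. The Norton inequality bounds each of them below by
  \<open>(x\<^sub>i x\<^sub>j, x\<^sub>i x\<^sub>j) \<ge> 0\<close>, so the \<open>x\<^sub>i\<close> are pairwise annihilating. Hence \<open>a x\<^sub>i = x\<^sub>i\<close>,
  and since \<open>1\<close> is a simple eigenvalue of \<open>a\<close>, every \<open>x\<^sub>i\<close> is a nonzero idempotent multiple
  of \<open>a\<close>, i.e. equals \<open>a\<close>; a sum of at least two copies of \<open>a \<noteq> 0\<close> cannot be \<open>a\<close>.
  Only the Norton inequality M2 is needed, not its equality case M2'.\<close>

locale frobenius_norton_algebra =
  fixes m :: "'v::real_inner \<Rightarrow> 'v \<Rightarrow> 'v"
  assumes bilinear: "bilinear m"
    and inner_assoc: "\<And>u v w. inner u (m v w) = inner (m u v) w"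
    and norton: "\<And>u v. inner (m u v) (m u v) \<le> inner (m u u) (m v v)"
begin

lemma inner_identity_idempotent:
  assumes "\<And>v. m e v = v" and "m y y = y"
  shows "inner e y = inner y y"
  using inner_assoc[of e y y] assms by simp

lemma inner_idempotents_ge:
  assumes "m x x = x" and "m y y = y"
  shows "inner (m x y) (m x y) \<le> inner x y"
  using norton[of x y] assms by simp

lemma inner_idempotents_nonneg:
  assumes "m x x = x" and "m y y = y"
  shows "0 \<le> inner x y"
  using inner_idempotents_ge[OF assms] inner_ge_zero order_trans by blast

lemma idempotent_sum_orthogonal:
  assumes identity: "\<And>v. m e v = v"
    and "finite I"
    and idem: "\<And>i. i \<in> I \<Longrightarrow> m (x i) (x i) = x i"
    and sum_idem: "m (\<Sum>i\<in>I. x i) (\<Sum>i\<in>I. x i) = (\<Sum>i\<in>I. x i)"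
    and "i \<in> I" "j \<in> I" "i \<noteq> j"
  shows "m (x i) (x j) = 0"
proof -
  define a where "a = (\<Sum>i\<in>I. x i)"
  define cross where "cross i = (\<Sum>j\<in>I - {i}. inner (x i) (x j))" for i
  have cross_nonneg: "0 \<le> cross i" if "i \<in> I" for i
    unfolding cross_def using idem that by (auto intro!: sum_nonneg inner_idempotents_nonneg)
  have "inner a a = inner e a"
    using inner_identity_idempotent[OF identity sum_idem] by (simp add: a_def)
  also have "\<dots> = (\<Sum>i\<in>I. inner (x i) (x i))"
    by (simp add: a_def inner_sum_right inner_identity_idempotent[OF identity] idem)
  finally have diag: "inner a a = (\<Sum>i\<in>I. inner (x i) (x i))" .
  have "inner a a = (\<Sum>i\<in>I. \<Sum>j\<in>I. inner (x i) (x j))"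
    unfolding a_def by (simp add: inner_sum_left inner_sum_right) (rule sum.swap)
  also have "\<dots> = (\<Sum>i\<in>I. inner (x i) (x i) + cross i)"
    using \<open>finite I\<close> by (intro sum.cong) (simp_all add: cross_def sum.remove)
  finally have "(\<Sum>i\<in>I. cross i) = 0"
    using diag by (simp add: sum.distrib)
  then have "cross i = 0"
    using \<open>finite I\<close> \<open>i \<in> I\<close> cross_nonneg by (simp add: sum_nonneg_eq_0_iff)
  then have "\<forall>k\<in>I - {i}. inner (x i) (x k) = 0"
    using \<open>finite I\<close> \<open>i \<in> I\<close> idem unfolding cross_def
    by (subst (asm) sum_nonneg_eq_0_iff) (auto intro: inner_idempotents_nonneg)
  then have "inner (x i) (x j) = 0"
    using \<open>j \<in> I\<close> \<open>i \<noteq> j\<close> by blast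
  then have "inner (m (x i) (x j)) (m (x i) (x j)) \<le> 0"
    using inner_idempotents_ge idem assms(5,6) by metis
  then show ?thesis
    by (metis inner_ge_zero inner_eq_zero_iff order_antisym)
qed

lemma idempotent_multiple:
  assumes "m a a = a" and "a \<noteq> 0" and "m x x = x" and "x \<noteq> 0" and "x = c *\<^sub>R a"
  shows "x = a"
proof -
  have "(c * c) *\<^sub>R a = c *\<^sub>R a"
    using assms(1,3,5) bilinear by (simp add: bilinear_lmul bilinear_rmul)
  then have "c * c = c"
    using \<open>a \<noteq> 0\<close> by (metis scaleR_cancel_right)
  then have "c = 1"
    using assms(4,5) by (metis mult_cancel_right1 scale_zero_left)
  then show ?thesis
    using assms(5) by simp
qed

lemma primitive_idempotent_sum_card:
  assumes identity: "\<And>v. m e v = v"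
    and a_idem: "m a a = a" and "a \<noteq> 0"
    and eigen1: "\<And>v. m a v = v \<Longrightarrow> \<exists>c. v = c *\<^sub>R a"
    and "finite I"
    and idem: "\<And>i. i \<in> I \<Longrightarrow> m (x i) (x i) = x i"
    and nonzero: "\<And>i. i \<in> I \<Longrightarrow> x i \<noteq> 0"
    and sum: "(\<Sum>i\<in>I. x i) = a"
  shows "card I = 1"
proof -
  have orthogonal: "m (x j) (x i) = 0" if "j \<in> I" "i \<in> I" "j \<noteq> i" for i j
    using that by (intro idempotent_sum_orthogonal[OF identity \<open>finite I\<close>, of x]) (simp_all add: idem sum a_idem)
  have x_eq_a: "x i = a" if "i \<in> I" for i
  proof -
    have "m a (x i) = (\<Sum>j\<in>I. m (x j) (x i))"
      using sum bilinear linear_sum[of "\<lambda>u. m u (x i)"] by (auto simp: bilinear_def)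
    also have "\<dots> = m (x i) (x i) + (\<Sum>j\<in>I - {i}. m (x j) (x i))"
      using \<open>finite I\<close> that by (simp add: sum.remove)
    also have "(\<Sum>j\<in>I - {i}. m (x j) (x i)) = 0"
      using orthogonal that by (intro sum.neutral) auto
    finally have "m a (x i) = x i"
      using idem that by simp
    then obtain c where "x i = c *\<^sub>R a"
      using eigen1 by blast
    then show ?thesis
      using idempotent_multiple a_idem \<open>a \<noteq> 0\<close> idem nonzero that by blast
  qed
  have "(\<Sum>i\<in>I. x i) = (\<Sum>i\<in>I. a)"
    using x_eq_a by (rule sum.cong[OF refl])
  then have "of_nat (card I) *\<^sub>R a = a"
    by (metis sum sum_constant_scaleR)
  then have "of_nat (card I) *\<^sub>R a = 1 *\<^sub>R a"
    by simp
  then show ?thesis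
    using \<open>a \<noteq> 0\<close> by (metis scaleR_cancel_right of_nat_eq_1_iff)
qed

end

lemma majorana_rep_frobenius_norton_algebra:
  assumes "majorana_rep G T m \<phi> \<psi>"
  shows "frobenius_norton_algebra m"
  using assms unfolding majorana_rep_def frobenius_norton_algebra_def
  by (elim conjE) (intro conjI; assumption)

lemma majorana_axis:
  assumes "majorana_rep G T m \<phi> \<psi>" and "t \<in> T"
  shows "m (\<psi> t) (\<psi> t) = \<psi> t" and "\<psi> t \<noteq> 0"
    and "\<And>v. m (\<psi> t) v = v \<Longrightarrow> \<exists>c. v = c *\<^sub>R \<psi> t"
  using assms unfolding majorana_rep_def by simp_all

theorem mainTheorem6:
  fixes G :: "('g, 'b) monoid_scheme" and T :: "'g set"
    and m :: "'v::real_inner \<Rightarrow> 'v \<Rightarrow> 'v" and \<phi> :: "'g \<Rightarrow> 'v \<Rightarrow> 'v" and \<psi> :: "'g \<Rightarrow> 'v"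
  assumes "majorana_rep G T m \<phi> \<psi>"
    and "has_identity m"
    and "axiom_M2' m"
  shows "\<forall>t\<in>T. indecomposable_idempotent m (\<psi> t)"
proof
  fix t assume "t \<in> T"
  interpret frobenius_norton_algebra m
    using majorana_rep_frobenius_norton_algebra[OF assms(1)] .
  obtain e where identity: "\<And>v. m e v = v"
    using assms(2) unfolding has_identity_def by blast
  note axis = majorana_axis[OF assms(1) \<open>t \<in> T\<close>]
  have "\<not> decomposable m (\<psi> t)"
  proof
    assume "decomposable m (\<psi> t)"
    then obtain xs where xs: "2 \<le> length xs" "\<forall>y\<in>set xs. y \<noteq> 0 \<and> m y y = y"
      "(\<Sum>i<length xs. xs ! i) = \<psi> t"
      unfolding decomposable_def idempotent_def by (auto simp: sum_list_sum_nth atLeast0LessThan)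
    have "card {..<length xs} = 1"
      using primitive_idempotent_sum_card[OF identity axis(1,2,3), of "{..<length xs}" "(!) xs"] xs
      by (simp add: nth_mem)
    with xs(1) show False
      by simp
  qed
  with axis(1) show "indecomposable_idempotent m (\<psi> t)"
    by (simp add: indecomposable_idempotent_def idempotent_def)
qed

end
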